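(* Let $q$ be a prime power, $Q=q^m$, $\mathbb{L}=\mathrm{GF}(Q)$, $n\mid Q-1$, and $F_n=\{f\in\mathbb{L}^n : f_{qi\bmod n}=f_i^q\ \forall i\in\mathbb{Z}/n\mathbb{Z}\}$. Let $0\le\delta\le1/2$ and $s=\lfloor\delta n\rfloor$. If every $g\in\mathbb{L}^n$ can be written as $g=f+h$ with $f\in F_n$ and $|\{i : h_i\ne0\}|\le s$, then $$1+\frac{h_2(\delta)}{\log_2 q}+\delta\log_q(Q-1)\ge m-o(1),$$ where $h_2(\delta)=-\delta\log_2\delta-(1-\delta)\log_2(1-\delta)$ and $o(1)$ denotes a term tending to $0$ as $n\to\infty$. *)

theory Defs
  imports Complex_Main "HOL-Algebra.Ring" "HOL-Number_Theory.Prime_Powers"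
begin

text \<open>Vectors in L^n are modelled as functions nat => element type, indexed by
  {0..<n} (= Z/nZ); only the values at indices i < n matter.\<close>

definition vec_in :: "('a, 'b) ring_scheme \<Rightarrow> nat \<Rightarrow> (nat \<Rightarrow> 'a) \<Rightarrow> bool" where
  "vec_in R n v \<longleftrightarrow> (\<forall>i<n. v i \<in> carrier R)"

definition Fn :: "('a, 'b) ring_scheme \<Rightarrow> nat \<Rightarrow> nat \<Rightarrow> (nat \<Rightarrow> 'a) set" where
  "Fn R q n = {f. vec_in R n f \<and> (\<forall>i<n. f ((q * i) mod n) = f i [^]\<^bsub>R\<^esub> q)}"

definition hweight :: "('a, 'b) ring_scheme \<Rightarrow> nat \<Rightarrow> (nat \<Rightarrow> 'a) \<Rightarrow> nat" where
  "hweight R n h = card {i. i < n \<and> h i \<noteq> \<zero>\<^bsub>R\<^esub>}"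

definition h2 :: "real \<Rightarrow> real" where
  "h2 d = (if d = 0 \<or> d = 1 then 0 else - d * log 2 d - (1 - d) * log 2 (1 - d))"

end

theory Submission
  imports Defs "HOL-Algebra.Multiplicative_Group" "HOL-Number_Theory.Residues"
begin

text \<open>Counting argument, with the \<open>o(1)\<close> term equal to \<open>0\<close>. On every
  \<open>q\<close>-cyclotomic coset \<open>C\<close> modulo \<open>n\<close> a vector \<open>f \<in> F\<^sub>n\<close> is determined by one
  coordinate, which is a root of \<open>x\<^bsup>q\<^sup>d\<^esup> = x\<close> for some \<open>d \<le> |C|\<close>;
  hence \<open>|F\<^sub>n| \<le> q\<^sup>n\<close>. If \<open>F\<^sub>n\<close> plus the Hamming ball of radius \<open>s\<close> covers
  \<open>\<bbbL>\<^sup>n\<close>, then \<open>Q\<^sup>n \<le> q\<^sup>n \<Sum>\<^sub>j\<^sub>\<le>\<^sub>s (n choose j) (Q - 1)\<^sup>s \<le> q\<^sup>n 2\<^bsup>n h\<^sub>2(\<delta>)\<^esup> (Q - 1)\<^bsup>\<delta> n\<^esup>\<close>,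
  and taking \<open>log\<^sub>q\<close> and dividing by \<open>n\<close> gives the claim.\<close>

lemma (in domain) card_roots_pow_eq_self_le:
  assumes "finite (carrier R)" "2 \<le> N"
  shows "card {x \<in> carrier R. x [^] N = x} \<le> N"
proof -
  have "{x \<in> carrier R. x [^] N = x} \<subseteq> insert \<zero> {x \<in> carrier R. x [^] (N - 1) = \<one>}"
  proof
    fix x assume x: "x \<in> {x \<in> carrier R. x [^] N = x}"
    show "x \<in> insert \<zero> {x \<in> carrier R. x [^] (N - 1) = \<one>}"
    proof (cases "x = \<zero>")
      case False
      have "x [^] (N - 1) \<otimes> x = \<one> \<otimes> x"
        using x assms(2) nat_pow_Suc[of x "N - 1"] by (simp add: Suc_diff_1)
      then show ?thesis using x False m_rcancel[of x "x [^] (N - 1)" \<one>] by simp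
    qed simp
  qed
  then have "card {x \<in> carrier R. x [^] N = x}
      \<le> card (insert \<zero> {x \<in> carrier R. x [^] (N - 1) = \<one>})"
    using assms(1) by (intro card_mono) auto
  also have "\<dots> \<le> Suc (card {x \<in> carrier R. x [^] (N - 1) = \<one>})"
    by (rule card_insert_le_m1) auto
  finally have "card {x \<in> carrier R. x [^] N = x} \<le> Suc (card {x \<in> carrier R. x [^] (N - 1) = \<one>})" .
  moreover have "card {x \<in> carrier R. x [^] (N - 1) = \<one>} \<le> N - 1"
    using num_roots_le_deg[OF assms(1)] assms(2) by simp
  ultimately show ?thesis using assms(2) by linarith
qed

definition cyclotomic_coset :: "nat \<Rightarrow> nat \<Rightarrow> nat \<Rightarrow> nat set" where
  "cyclotomic_coset q n r = range (\<lambda>j. q ^ j * r mod n)"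

lemma self_mem_cyclotomic_coset: "r < n \<Longrightarrow> r \<in> cyclotomic_coset q n r"
  unfolding cyclotomic_coset_def by (rule image_eqI[of _ _ 0]) auto

lemma cyclotomic_coset_subset_lessThan: "0 < n \<Longrightarrow> cyclotomic_coset q n r \<subseteq> {..<n}"
  unfolding cyclotomic_coset_def by auto

lemma power_Suc_mult_mod: "q ^ Suc j * r mod n = q * (q ^ j * r mod n) mod (n :: nat)"
  by (simp add: mod_mult_right_eq mult.assoc)

lemma cyclotomic_coset_subset:
  assumes "r \<in> S" "r < n" and closed: "\<forall>i\<in>S. q * i mod n \<in> S"
  shows "cyclotomic_coset q n r \<subseteq> S"
proof -
  have "q ^ j * r mod n \<in> S" for j
  proof (induction j)
    case 0
    then show ?case using assms(1,2) by simp
  next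
    case (Suc j)
    then show ?case using closed power_Suc_mult_mod[of q j r n] by metis
  qed
  then show ?thesis unfolding cyclotomic_coset_def by auto
qed

text \<open>Multiplication by \<open>q\<close> permutes \<open>\<int>/n\<int>\<close>: its inverse is multiplication
  by \<open>q\<^bsup>\<phi>(n) - 1\<^esup>\<close>.\<close>

lemma mem_cyclotomic_coset_of_mult:
  assumes "coprime q n" "i < n" "q * i mod n \<in> cyclotomic_coset q n r"
  shows "i \<in> cyclotomic_coset q n r"
proof -
  obtain j where j: "q * i mod n = q ^ j * r mod n"
    using assms(3) unfolding cyclotomic_coset_def by auto
  define t where "t = totient n"
  have "0 < t" using assms(2) unfolding t_def by simp
  have "[i = q ^ t * i] (mod n)"
    using cong_scalar_right[OF euler_theorem[OF assms(1)], of i] unfolding t_def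
    by (simp add: cong_sym)
  also have "q ^ t * i = q ^ (t - 1) * (q * i)"
    using \<open>0 < t\<close> by (metis Suc_diff_1 mult.assoc power_Suc2)
  also have "[q ^ (t - 1) * (q * i) = q ^ (t - 1) * (q ^ j * r)] (mod n)"
    using j by (intro cong_scalar_left) (simp add: cong_def)
  finally have "i = q ^ (t - 1 + j) * r mod n"
    using assms(2) by (simp add: cong_def power_add mult.assoc)
  then show ?thesis unfolding cyclotomic_coset_def by auto
qed

lemma cyclotomic_coset_period:
  assumes "coprime q n" "r < n"
  obtains d where "0 < d" "d \<le> card (cyclotomic_coset q n r)" "q ^ d * r mod n = r"
proof -
  let ?C = "cyclotomic_coset q n r"
  have "finite ?C"
    using cyclotomic_coset_subset_lessThan[of n q r] assms(2) finite_subset by blast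
  have "\<not> inj_on (\<lambda>j. q ^ j * r mod n) {..card ?C}"
  proof
    assume "inj_on (\<lambda>j. q ^ j * r mod n) {..card ?C}"
    moreover have "(\<lambda>j. q ^ j * r mod n) ` {..card ?C} \<subseteq> ?C"
      unfolding cyclotomic_coset_def by auto
    ultimately have "card {..card ?C} \<le> card ?C" using \<open>finite ?C\<close> by (rule card_inj_on_le)
    then show False by simp
  qed
  then obtain x y where xy: "x \<le> card ?C" "y \<le> card ?C" "x \<noteq> y"
      "q ^ x * r mod n = q ^ y * r mod n"
    unfolding inj_on_def by auto
  obtain a b where ab: "a < b" "b \<le> card ?C" "q ^ a * r mod n = q ^ b * r mod n"
  proof (cases "x < y")
    case True
    then show ?thesis using that[of x y] xy by simp
  next
    case False
    then show ?thesis using that[of y x] xy by simp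
  qed
  have "[q ^ a * r = q ^ a * (q ^ (b - a) * r)] (mod n)"
    using ab unfolding cong_def by (metis le_add_diff_inverse less_imp_le mult.assoc power_add)
  then have "[r = q ^ (b - a) * r] (mod n)"
    using cong_mult_lcancel_nat[of "q ^ a" n] assms(1) by simp
  then have "q ^ (b - a) * r mod n = r"
    using assms(2) by (simp add: cong_def)
  then show ?thesis using that[of "b - a"] ab by simp
qed

lemma Fn_at_cyclotomic_coset:
  assumes "monoid L" "f \<in> Fn L q n" "r < n"
  shows "f (q ^ j * r mod n) = f r [^]\<^bsub>L\<^esub> (q ^ j)"
proof -
  have "f r \<in> carrier L" using assms by (auto simp: Fn_def vec_in_def)
  show ?thesis
  proof (induction j)
    case 0
    show ?case using \<open>f r \<in> carrier L\<close> assms by (simp add: monoid.nat_pow_eone)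
  next
    case (Suc j)
    have "f (q ^ Suc j * r mod n) = f (q ^ j * r mod n) [^]\<^bsub>L\<^esub> q"
      using assms(2,3) power_Suc_mult_mod[of q j r n] by (auto simp: Fn_def)
    also have "\<dots> = f r [^]\<^bsub>L\<^esub> (q ^ Suc j)"
      using Suc monoid.nat_pow_pow[OF assms(1) \<open>f r \<in> carrier L\<close>] by (simp add: mult.commute)
    finally show ?case .
  qed
qed

lemma finite_restrict_Fn:
  assumes "finite (carrier L)" "S \<subseteq> {..<n}"
  shows "finite ((\<lambda>f. restrict f S) ` Fn L q n)"
proof (rule finite_subset)
  show "(\<lambda>f. restrict f S) ` Fn L q n \<subseteq> S \<rightarrow>\<^sub>E carrier L"
    using assms(2) by (auto simp: Fn_def vec_in_def)
  show "finite (S \<rightarrow>\<^sub>E carrier L)"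
    using assms finite_subset by (intro finite_PiE) auto
qed

text \<open>On a cyclotomic coset \<open>C\<close> with period \<open>d \<le> |C|\<close>, a vector \<open>f \<in> F\<^sub>n\<close>
  is determined by \<open>f\<^sub>r\<close>, and \<open>f\<^sub>r = f\<^sub>r\<^bsup>q\<^sup>d\<^esup>\<close>.\<close>

lemma card_restrict_Fn_cyclotomic_coset_le:
  assumes "domain L" "finite (carrier L)" "2 \<le> q" "coprime q n" "r < n"
  shows "card ((\<lambda>f. restrict f (cyclotomic_coset q n r)) ` Fn L q n)
    \<le> q ^ card (cyclotomic_coset q n r)"
proof -
  interpret L: domain L by fact
  let ?C = "cyclotomic_coset q n r"
  let ?R = "(\<lambda>f. restrict f ?C) ` Fn L q n"
  obtain d where d: "0 < d" "d \<le> card ?C" "q ^ d * r mod n = r"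
    using cyclotomic_coset_period assms(4,5) by blast
  have r: "r \<in> ?C" using assms(5) by (rule self_mem_cyclotomic_coset)
  have "inj_on (\<lambda>g. g r) ?R"
  proof (rule inj_onI)
    fix g g' assume "g \<in> ?R" "g' \<in> ?R" "g r = g' r"
    then obtain f f' where f: "f \<in> Fn L q n" "g = restrict f ?C"
      and f': "f' \<in> Fn L q n" "g' = restrict f' ?C" and "f r = f' r"
      using r by auto
    have "f i = f' i" if "i \<in> ?C" for i
    proof -
      obtain j where "i = q ^ j * r mod n" using \<open>i \<in> ?C\<close> unfolding cyclotomic_coset_def by auto
      then show ?thesis
        using Fn_at_cyclotomic_coset[OF L.is_monoid f(1) assms(5)]
          Fn_at_cyclotomic_coset[OF L.is_monoid f'(1) assms(5)] \<open>f r = f' r\<close> by simp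
    qed
    then show "g = g'" using f f' by auto
  qed
  then have "card ?R = card ((\<lambda>g. g r) ` ?R)" by (rule card_image[symmetric])
  also have "\<dots> \<le> card {x \<in> carrier L. x [^]\<^bsub>L\<^esub> (q ^ d) = x}"
  proof (rule card_mono)
    show "finite {x \<in> carrier L. x [^]\<^bsub>L\<^esub> (q ^ d) = x}" using assms(2) by simp
    show "(\<lambda>g. g r) ` ?R \<subseteq> {x \<in> carrier L. x [^]\<^bsub>L\<^esub> (q ^ d) = x}"
      using Fn_at_cyclotomic_coset[OF L.is_monoid _ assms(5), of _ q d] d(3) r assms(5)
      by (auto simp: Fn_def vec_in_def)
  qed
  also have "\<dots> \<le> q ^ d"
  proof (rule L.card_roots_pow_eq_self_le[OF assms(2)])
    show "2 \<le> q ^ d" using assms(3) d(1) power_increasing[of 1 d q] by simp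
  qed
  also have "\<dots> \<le> q ^ card ?C" using assms(3) d(2) by (intro power_increasing) auto
  finally show ?thesis .
qed

lemma card_image_restrict_Un_le:
  assumes "finite ((\<lambda>f. restrict f A) ` F)" "finite ((\<lambda>f. restrict f B) ` F)"
  shows "card ((\<lambda>f. restrict f (A \<union> B)) ` F)
    \<le> card ((\<lambda>f. restrict f A) ` F) * card ((\<lambda>f. restrict f B) ` F)"
proof -
  let ?split = "\<lambda>g. (restrict g A, restrict g B)"
  have "inj_on ?split ((\<lambda>f. restrict f (A \<union> B)) ` F)"
    by (rule inj_onI) (auto simp: fun_eq_iff restrict_def split: if_splits)
  moreover have "?split ` (\<lambda>f. restrict f (A \<union> B)) ` F
      \<subseteq> (\<lambda>f. restrict f A) ` F \<times> (\<lambda>f. restrict f B) ` F"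
    by (auto simp: Int_absorb1)
  ultimately have "card ((\<lambda>f. restrict f (A \<union> B)) ` F)
      \<le> card ((\<lambda>f. restrict f A) ` F \<times> (\<lambda>f. restrict f B) ` F)"
    using assms by (intro card_inj_on_le) auto
  then show ?thesis by (simp add: card_cartesian_product)
qed

text \<open>Induction on \<open>|S|\<close>, splitting off one cyclotomic coset; what remains of
  \<open>S\<close> is again closed under multiplication by \<open>q\<close>.\<close>

lemma card_restrict_Fn_le:
  assumes "domain L" "finite (carrier L)" "2 \<le> q" "coprime q n"
  shows "S \<subseteq> {..<n} \<Longrightarrow> \<forall>i\<in>S. q * i mod n \<in> S \<Longrightarrow>
    card ((\<lambda>f. restrict f S) ` Fn L q n) \<le> q ^ card S"
proof (induction "card S" arbitrary: S rule: less_induct)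
  case less
  show ?case
  proof (cases "S = {}")
    case True
    have "finite ((\<lambda>f. restrict f S) ` Fn L q n)"
      using finite_restrict_Fn[OF assms(2)] less.prems(1) by blast
    then have "card ((\<lambda>f. restrict f S) ` Fn L q n) \<le> 1"
      using True by (auto simp: card_le_Suc0_iff_eq)
    then show ?thesis using True by simp
  next
    case False
    then obtain r where "r \<in> S" by auto
    have "r < n" using \<open>r \<in> S\<close> less.prems(1) by auto
    let ?C = "cyclotomic_coset q n r"
    have "finite S" using less.prems(1) finite_subset by blast
    have "?C \<subseteq> S" using cyclotomic_coset_subset \<open>r \<in> S\<close> \<open>r < n\<close> less.prems(2) by blast
    have "card (S - ?C) < card S"
      using \<open>finite S\<close> \<open>r \<in> S\<close> self_mem_cyclotomic_coset[OF \<open>r < n\<close>]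
      by (intro psubset_card_mono) auto
    moreover have "\<forall>i\<in>S - ?C. q * i mod n \<in> S - ?C"
      using less.prems mem_cyclotomic_coset_of_mult[OF assms(4)] by blast
    ultimately have IH: "card ((\<lambda>f. restrict f (S - ?C)) ` Fn L q n) \<le> q ^ card (S - ?C)"
      using less.hyps less.prems(1) by auto
    have "S - ?C \<subseteq> {..<n}" "?C \<subseteq> {..<n}" using less.prems(1) \<open>?C \<subseteq> S\<close> by auto
    then have "card ((\<lambda>f. restrict f ((S - ?C) \<union> ?C)) ` Fn L q n)
        \<le> card ((\<lambda>f. restrict f (S - ?C)) ` Fn L q n) * card ((\<lambda>f. restrict f ?C) ` Fn L q n)"
      by (intro card_image_restrict_Un_le finite_restrict_Fn[OF assms(2)])
    moreover have "(S - ?C) \<union> ?C = S" using \<open>?C \<subseteq> S\<close> by auto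
    ultimately have "card ((\<lambda>f. restrict f S) ` Fn L q n)
        \<le> card ((\<lambda>f. restrict f (S - ?C)) ` Fn L q n) * card ((\<lambda>f. restrict f ?C) ` Fn L q n)"
      by simp
    also have "\<dots> \<le> q ^ card (S - ?C) * q ^ card ?C"
      using IH card_restrict_Fn_cyclotomic_coset_le[OF assms \<open>r < n\<close>] by (rule mult_mono) auto
    also have "\<dots> = q ^ card S"
      using card_Diff_subset[of ?C S] card_mono[OF \<open>finite S\<close> \<open>?C \<subseteq> S\<close>] \<open>finite S\<close> \<open>?C \<subseteq> S\<close>
      by (simp add: power_add[symmetric] finite_subset)
    finally show ?thesis .
  qed
qed

definition hamming_ball :: "'a set \<Rightarrow> 'a \<Rightarrow> nat \<Rightarrow> nat \<Rightarrow> (nat \<Rightarrow> 'a) set" where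
  "hamming_ball A z n s = {h \<in> {..<n} \<rightarrow>\<^sub>E A. card {i. i < n \<and> h i \<noteq> z} \<le> s}"

lemma card_subsets_card_le: "card {T. T \<subseteq> {..<n} \<and> card T \<le> s} \<le> (\<Sum>j\<le>s. n choose j)"
proof -
  have "{T. T \<subseteq> {..<n} \<and> card T \<le> s} = (\<Union>j\<le>s. {T. T \<subseteq> {..<n} \<and> card T = j})" by auto
  then have "card {T. T \<subseteq> {..<n} \<and> card T \<le> s} \<le> (\<Sum>j\<le>s. card {T. T \<subseteq> {..<n} \<and> card T = j})"
    by (simp add: card_UN_le)
  then show ?thesis by (simp add: n_subsets)
qed

lemma card_hamming_ball_le:
  assumes "finite A" "z \<in> A" "2 \<le> card A"
  shows "card (hamming_ball A z n s) \<le> (\<Sum>j\<le>s. n choose j) * (card A - 1) ^ s"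
proof -
  define TS where "TS = {T. T \<subseteq> {..<n} \<and> card T \<le> s}"
  define P where "P T = PiE {..<n} (\<lambda>i. if i \<in> T then A - {z} else {z})" for T
  have "finite TS" unfolding TS_def by (rule finite_subset[of _ "Pow {..<n}"]) auto
  have "finite (P T)" for T unfolding P_def using assms(1) by (intro finite_PiE) auto
  have "hamming_ball A z n s \<subseteq> (\<Union>T\<in>TS. P T)"
  proof
    fix h assume h: "h \<in> hamming_ball A z n s"
    then have "{i. i < n \<and> h i \<noteq> z} \<in> TS" "h \<in> P {i. i < n \<and> h i \<noteq> z}"
      by (auto simp: hamming_ball_def TS_def P_def PiE_def Pi_def)
    then show "h \<in> (\<Union>T\<in>TS. P T)" by blast
  qed
  then have "card (hamming_ball A z n s) \<le> card (\<Union>T\<in>TS. P T)"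
    using \<open>finite TS\<close> \<open>\<And>T. finite (P T)\<close> by (intro card_mono) auto
  also have "\<dots> \<le> (\<Sum>T\<in>TS. card (P T))" using \<open>finite TS\<close> by (rule card_UN_le)
  also have "\<dots> \<le> (\<Sum>T\<in>TS. (card A - 1) ^ s)"
  proof (rule sum_mono)
    fix T assume "T \<in> TS"
    then have T: "T \<subseteq> {..<n}" "card T \<le> s" by (auto simp: TS_def)
    have "card (P T) = (\<Prod>i<n. if i \<in> T then card A - 1 else 1)"
      unfolding P_def using assms(1,2) by (simp add: card_PiE if_distrib cong: if_cong)
    also have "\<dots> = (card A - 1) ^ card T"
      using T(1) by (simp add: prod.If_cases Int_absorb1 flip: Int_def)
    also have "\<dots> \<le> (card A - 1) ^ s" using assms(3) T(2) by (intro power_increasing) auto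
    finally show "card (P T) \<le> (card A - 1) ^ s" .
  qed
  also have "\<dots> \<le> (\<Sum>j\<le>s. n choose j) * (card A - 1) ^ s"
    using card_subsets_card_le[of n s] by (simp add: TS_def)
  finally show ?thesis .
qed

lemma two_powr_neg_h2_le:
  fixes \<delta> :: real
  assumes "0 < \<delta>" "\<delta> \<le> 1/2" "real j \<le> \<delta> * real n"
  shows "2 powr (- real n * h2 \<delta>) \<le> \<delta> ^ j * (1 - \<delta>) ^ (n - j)"
proof -
  have "\<delta> * real n \<le> real n" using assms(1,2) by (simp add: mult_left_le_one_le)
  then have "j \<le> n" using assms(3) by linarith
  define r where "r = \<delta> / (1 - \<delta>)"
  have r: "0 < r" "r \<le> 1" using assms(1,2) by (auto simp: r_def field_simps)
  have "2 powr (- real n * h2 \<delta>) = \<delta> powr (\<delta> * n) * (1 - \<delta>) powr ((1 - \<delta>) * n)"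
    using assms(1,2) unfolding h2_def
    by (simp add: powr_def log_def exp_add[symmetric] field_simps)
  also have "(1 - \<delta>) * real n = real n - \<delta> * real n" by (simp add: algebra_simps)
  also have "(1 - \<delta>) powr (real n - \<delta> * real n) = (1 - \<delta>) powr n / (1 - \<delta>) powr (\<delta> * n)"
    by (rule powr_diff)
  also have "\<delta> powr (\<delta> * n) * ((1 - \<delta>) powr n / (1 - \<delta>) powr (\<delta> * n))
      = (1 - \<delta>) powr n * r powr (\<delta> * n)"
    unfolding r_def powr_divide by (simp add: times_divide_eq_right mult.commute)
  also have "\<dots> \<le> (1 - \<delta>) powr n * r powr j"
    using r assms(3) by (intro mult_left_mono powr_mono') auto
  also have "\<dots> = (1 - \<delta>) ^ (n - j) * (1 - \<delta>) ^ j * (\<delta> ^ j / (1 - \<delta>) ^ j)"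
    using assms(1,2) \<open>j \<le> n\<close>
    by (simp add: powr_realpow r_def power_divide flip: power_add)
  also have "\<dots> = \<delta> ^ j * (1 - \<delta>) ^ (n - j)"
    using assms(2) by simp
  finally show ?thesis .
qed

text \<open>The terms \<open>j \<le> \<delta> n\<close> of the binomial expansion of \<open>(\<delta> + (1 - \<delta>))\<^sup>n = 1\<close>
  are each at least \<open>2\<^bsup>-n h\<^sub>2(\<delta>)\<^esup>\<close> times \<open>n choose j\<close>.\<close>

lemma sum_binomial_le_2_powr_h2:
  fixes \<delta> :: real
  assumes "0 \<le> \<delta>" "\<delta> \<le> 1/2"
  shows "real (\<Sum>j\<le>nat \<lfloor>\<delta> * real n\<rfloor>. n choose j) \<le> 2 powr (real n * h2 \<delta>)"
proof (cases "\<delta> = 0")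
  case True
  then show ?thesis by (simp add: h2_def)
next
  case False
  then have "0 < \<delta>" using assms(1) by simp
  define s where "s = nat \<lfloor>\<delta> * real n\<rfloor>"
  have "real s \<le> \<delta> * real n" unfolding s_def using \<open>0 < \<delta>\<close> by simp
  moreover have "\<delta> * real n \<le> real n" using assms(2) \<open>0 < \<delta>\<close> by (simp add: mult_left_le_one_le)
  ultimately have "s \<le> n" by linarith
  let ?c = "2 powr (- real n * h2 \<delta>)"
  have "real (\<Sum>j\<le>s. n choose j) * ?c = (\<Sum>j\<le>s. real (n choose j) * ?c)"
    by (simp add: sum_distrib_right)
  also have "\<dots> \<le> (\<Sum>j\<le>s. real (n choose j) * (\<delta> ^ j * (1 - \<delta>) ^ (n - j)))"
    using two_powr_neg_h2_le[OF \<open>0 < \<delta>\<close> assms(2)] \<open>real s \<le> \<delta> * real n\<close>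
    by (intro sum_mono mult_left_mono) (auto intro: order_trans[rotated])
  also have "\<dots> \<le> (\<Sum>j\<le>n. real (n choose j) * (\<delta> ^ j * (1 - \<delta>) ^ (n - j)))"
    using \<open>s \<le> n\<close> \<open>0 < \<delta>\<close> assms(2) by (intro sum_mono2) auto
  also have "\<dots> = (\<delta> + (1 - \<delta>)) ^ n"
    unfolding binomial_ring by (simp add: mult.assoc)
  finally have "real (\<Sum>j\<le>s. n choose j) * ?c \<le> 1" by simp
  then show ?thesis
    unfolding s_def by (simp add: powr_minus field_simps)
qed

lemma card_pow_le_card_Fn_mult_card_hamming_ball:
  assumes "finite (carrier L)"
    and covering: "\<forall>g. vec_in L n g \<longrightarrow>
      (\<exists>f h. f \<in> Fn L q n \<and> vec_in L n h \<and> (\<forall>i<n. g i = f i \<oplus>\<^bsub>L\<^esub> h i) \<and> hweight L n h \<le> s)"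
  shows "card (carrier L) ^ n
    \<le> card ((\<lambda>f. restrict f {..<n}) ` Fn L q n) * card (hamming_ball (carrier L) \<zero>\<^bsub>L\<^esub> n s)"
proof -
  let ?V = "{..<n} \<rightarrow>\<^sub>E carrier L"
  let ?F = "(\<lambda>f. restrict f {..<n}) ` Fn L q n"
  let ?H = "hamming_ball (carrier L) \<zero>\<^bsub>L\<^esub> n s"
  have "finite ?F" using assms(1) by (rule finite_restrict_Fn) simp
  have "finite ?V" using assms(1) by (intro finite_PiE) auto
  then have "finite ?H" by (rule finite_subset[rotated]) (auto simp: hamming_ball_def)
  have "?V \<subseteq> (\<lambda>(f, h). restrict (\<lambda>i. f i \<oplus>\<^bsub>L\<^esub> h i) {..<n}) ` (?F \<times> ?H)"
  proof
    fix g assume g: "g \<in> ?V"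
    then have "vec_in L n g" by (auto simp: vec_in_def)
    then obtain f h where fh: "f \<in> Fn L q n" "vec_in L n h" "\<forall>i<n. g i = f i \<oplus>\<^bsub>L\<^esub> h i"
      "hweight L n h \<le> s"
      using covering by blast
    have "{i. i < n \<and> restrict h {..<n} i \<noteq> \<zero>\<^bsub>L\<^esub>} = {i. i < n \<and> h i \<noteq> \<zero>\<^bsub>L\<^esub>}"
      by auto
    then have "restrict h {..<n} \<in> ?H"
      using fh(2,4) by (auto simp: hamming_ball_def hweight_def vec_in_def)
    moreover have "g = restrict (\<lambda>i. restrict f {..<n} i \<oplus>\<^bsub>L\<^esub> restrict h {..<n} i) {..<n}"
      using g fh(3) by (auto simp: PiE_def extensional_def)
    ultimately show "g \<in> (\<lambda>(f, h). restrict (\<lambda>i. f i \<oplus>\<^bsub>L\<^esub> h i) {..<n}) ` (?F \<times> ?H)"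
      using fh(1) by (intro image_eqI[of _ _ "(restrict f {..<n}, restrict h {..<n})"]) auto
  qed
  then have "card ?V \<le> card ((\<lambda>(f, h). restrict (\<lambda>i. f i \<oplus>\<^bsub>L\<^esub> h i) {..<n}) ` (?F \<times> ?H))"
    using \<open>finite ?F\<close> \<open>finite ?H\<close> by (intro card_mono) auto
  also have "\<dots> \<le> card (?F \<times> ?H)" by (rule card_image_le) (use \<open>finite ?F\<close> \<open>finite ?H\<close> in auto)
  finally show ?thesis using assms(1) by (simp add: card_PiE card_cartesian_product)
qed

lemma log_le_of_count:
  fixes q Q B h \<delta> :: real and n s :: nat
  assumes "1 < q" "0 < n" "2 \<le> Q" "Q ^ n \<le> q ^ n * B * (Q - 1) ^ s"
    and "0 < B" "B \<le> 2 powr (n * h)" "real s \<le> \<delta> * n"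
  shows "log q Q \<le> 1 + h / log 2 q + \<delta> * log q (Q - 1)"
proof -
  have "n * log q Q = log q (Q ^ n)" using assms(3) by (simp add: log_nat_power)
  also have "\<dots> \<le> log q (q ^ n * B * (Q - 1) ^ s)"
    using assms(1,3,4,5) by (subst log_le_cancel_iff) auto
  also have "\<dots> = n + log q B + s * log q (Q - 1)"
    using assms(1,3,5) by (simp add: log_mult log_nat_power)
  also have "log q B \<le> n * h * log q 2"
    using assms(1,5,6) log_le_cancel_iff[of q B "2 powr (n * h)"] by (simp add: log_powr)
  also have "log q 2 = 1 / log 2 q" using assms(1) by (simp add: log_def)
  also have "s * log q (Q - 1) \<le> \<delta> * n * log q (Q - 1)"
    using assms(1,3,7) by (intro mult_right_mono) auto
  finally have "n * log q Q \<le> n * (1 + h / log 2 q + \<delta> * log q (Q - 1))"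
    by (simp add: algebra_simps)
  then show ?thesis using assms(2) by simp
qed

lemma coprime_of_dvd_power_minus_1:
  fixes q n :: nat
  assumes "0 < q" "0 < m" "n dvd q ^ m - 1"
  shows "coprime q n"
proof -
  have "[q ^ m = 1] (mod n)" using assms by (simp add: cong_altdef_nat)
  then have "coprime (q ^ m) n" by (metis cong_imp_coprime cong_sym coprime_1_left)
  then show ?thesis using assms(2) by simp
qed

lemma (in field) two_le_card_carrier: "finite (carrier R) \<Longrightarrow> 2 \<le> card (carrier R)"
  using card_mono[of "carrier R" "{\<one>, \<zero>}"] one_not_zero by simp

lemma card_pow_le_of_Fn_covering:
  assumes "field L" "finite (carrier L)" "2 \<le> q" "coprime q n"
    and covering: "\<forall>g. vec_in L n g \<longrightarrow>
      (\<exists>f h. f \<in> Fn L q n \<and> vec_in L n h \<and> (\<forall>i<n. g i = f i \<oplus>\<^bsub>L\<^esub> h i) \<and> hweight L n h \<le> s)"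
  shows "card (carrier L) ^ n \<le> q ^ n * (\<Sum>j\<le>s. n choose j) * (card (carrier L) - 1) ^ s"
proof -
  interpret L: field L by fact
  have "card (carrier L) ^ n
      \<le> card ((\<lambda>f. restrict f {..<n}) ` Fn L q n) * card (hamming_ball (carrier L) \<zero>\<^bsub>L\<^esub> n s)"
    using assms(2) covering by (rule card_pow_le_card_Fn_mult_card_hamming_ball)
  also have "\<dots> \<le> q ^ n * ((\<Sum>j\<le>s. n choose j) * (card (carrier L) - 1) ^ s)"
    using card_restrict_Fn_le[OF L.domain_axioms assms(2-4), of "{..<n}"]
      card_hamming_ball_le[OF assms(2) L.zero_closed L.two_le_card_carrier[OF assms(2)]]
    by (intro mult_le_mono) auto
  finally show ?thesis by (simp add: mult.assoc)
qed

lemma rate_bound_of_Fn_covering: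
  fixes \<delta> :: real
  assumes "2 \<le> q" "0 \<le> \<delta>" "\<delta> \<le> 1/2"
    and L: "field L" "finite (carrier L)" "card (carrier L) = q ^ m" and "n dvd q ^ m - 1"
    and covering: "\<forall>g. vec_in L n g \<longrightarrow> (\<exists>f h. f \<in> Fn L q n \<and> vec_in L n h \<and>
       (\<forall>i<n. g i = f i \<oplus>\<^bsub>L\<^esub> h i) \<and> hweight L n h \<le> nat \<lfloor>\<delta> * real n\<rfloor>)"
  shows "real m \<le> 1 + h2 \<delta> / log 2 q + \<delta> * log q (real (q ^ m) - 1)"
proof -
  let ?s = "nat \<lfloor>\<delta> * real n\<rfloor>" and ?B = "\<Sum>j\<le>nat \<lfloor>\<delta> * real n\<rfloor>. n choose j"
  have "2 \<le> q ^ m" using field.two_le_card_carrier[OF L(1,2)] L(3) by simp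
  then have "0 < m" "0 < n" using \<open>n dvd q ^ m - 1\<close> by (auto intro: Nat.gr0I dest: dvd_imp_le)
  then have "coprime q n" using coprime_of_dvd_power_minus_1 \<open>2 \<le> q\<close> \<open>n dvd q ^ m - 1\<close> by simp
  then have "(q ^ m) ^ n \<le> q ^ n * ?B * (q ^ m - 1) ^ ?s"
    using card_pow_le_of_Fn_covering[OF L(1,2) \<open>2 \<le> q\<close> _ covering] L(3) by simp
  then have "real ((q ^ m) ^ n) \<le> real (q ^ n * ?B * (q ^ m - 1) ^ ?s)"
    by (simp only: of_nat_le_iff)
  then have "real (q ^ m) ^ n \<le> real q ^ n * real ?B * (real (q ^ m) - 1) ^ ?s"
    using \<open>2 \<le> q ^ m\<close> by (simp add: of_nat_diff)
  moreover have "0 < real ?B" by (simp add: sum_pos2[of _ 0])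
  moreover have "real ?s \<le> \<delta> * real n" using assms(2) by simp
  moreover have "2 \<le> real (q ^ m)" using \<open>2 \<le> q ^ m\<close> by linarith
  ultimately have "log q (q ^ m) \<le> 1 + h2 \<delta> / log 2 q + \<delta> * log q (real (q ^ m) - 1)"
    using \<open>2 \<le> q\<close> \<open>0 < n\<close> sum_binomial_le_2_powr_h2[OF assms(2,3), of n]
    by (intro log_le_of_count[of q n "q ^ m" ?B ?s]) simp_all
  then show ?thesis using \<open>2 \<le> q\<close> by simp
qed

theorem corollary11p4:
  fixes q :: nat and \<delta> :: real
  assumes "primepow q"
    and "0 \<le> \<delta>" and "\<delta> \<le> 1/2"
  shows "\<exists>\<epsilon> :: nat \<Rightarrow> real. \<epsilon> \<longlonglongrightarrow> 0 \<and>
    (\<forall>(L :: nat ring) (m :: nat) (n :: nat).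
       field L \<and> finite (carrier L) \<and> card (carrier L) = q ^ m \<and> n dvd (q ^ m - 1) \<and>
       (\<forall>g. vec_in L n g \<longrightarrow>
          (\<exists>f h. f \<in> Fn L q n \<and> vec_in L n h \<and> (\<forall>i<n. g i = f i \<oplus>\<^bsub>L\<^esub> h i) \<and>
                 hweight L n h \<le> nat \<lfloor>\<delta> * real n\<rfloor>))
       \<longrightarrow> 1 + h2 \<delta> / log 2 (real q) + \<delta> * log (real q) (real (q ^ m) - 1) \<ge> real m - \<epsilon> n)"
proof -
  have "2 \<le> q" using primepow_gt_Suc_0[OF assms(1)] by simp
  then show ?thesis
    using rate_bound_of_Fn_covering[OF _ assms(2,3)] by (intro exI[of _ "\<lambda>_. 0"]) auto
qed

end
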